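(* Let $\Gamma$ be a finite alphabet and $n\ge2$, and fix a bijection between $\Gamma^{n-1}$ and $\{1,\dots,|\Gamma|^{n-1}\}$ giving one-hot encodings $\mathbb 1(g_1\cdots g_{n-1})\in\{0,1\}^{|\Gamma|^{n-1}}$. There exists a function $F=M\circ N$, where $N(a)=a/\|a\|_1$ and $M$ is a ReLU MLP, such that for every string $w=w_1\cdots w_T\in\Gamma^T$ and every $s$ with $n-1\le s\le T$, $$F(A_s)=\mathbb 1(w_{s-n+2}\cdots w_s),$$ the one-hot encoding of the last $n-1$ symbols up to position $s$.
   Context: Let $\mathbb 1(g)\in\{0,1\}^{|\Gamma|}$ be the one-hot encoding of $g\in\Gamma$, and for $n-1\le s\le T$ let $A_s=\frac{1}{n-1}\sum_{j=s-n+2}^{s}10^{-j}\mathbb 1(w_j)$ (the output at position $s$ of a single hard-attention head that attends uniformly to the last $n-1$ positions with values $10^{-j}\mathbb 1(w_j)$). A ReLU MLP with $k$ hidden layers is a map $x\mapsto W_{k+1}\,\mathrm{ReLU}(W_k\cdots\mathrm{ReLU}(W_1x+b_1)\cdots+b_k)+b_{k+1}$ with real matrices $W_i$ and vectors $b_i$, where $\mathrm{ReLU}$ acts entrywise as $\max(0,\cdot)$. *)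

theory Defs
  imports Complex_Main
begin

definition relu :: "real \<Rightarrow> real" where
  "relu x = max 0 x"

text \<open>Layers after the first: each entry (d, W, b) applies ReLU to the first d coordinates
  of the previous pre-activation vector (a hidden layer of width d), followed by the affine
  map W, b.\<close>
fun apply_layers :: "(nat \<times> (nat \<Rightarrow> nat \<Rightarrow> real) \<times> (nat \<Rightarrow> real)) list
    \<Rightarrow> (nat \<Rightarrow> real) \<Rightarrow> (nat \<Rightarrow> real)" where
  "apply_layers [] y = y"
| "apply_layers ((d, W, b) # L) y =
     apply_layers L (\<lambda>j. (\<Sum>i<d. W j i * relu (y i)) + b j)"

text \<open>A ReLU MLP with input in R^Gamma (coordinates indexed by the alphabet) and real vector
  output: x \<mapsto> W_{k+1} ReLU(W_k ... ReLU(W_1 x + b_1) ... + b_k) + b_{k+1}.\<close>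
definition is_relu_mlp :: "(('g::finite \<Rightarrow> real) \<Rightarrow> (nat \<Rightarrow> real)) \<Rightarrow> bool" where
  "is_relu_mlp M \<longleftrightarrow>
     (\<exists>(W1 :: nat \<Rightarrow> 'g \<Rightarrow> real) (b1 :: nat \<Rightarrow> real) L.
        M = (\<lambda>x. apply_layers L (\<lambda>j. (\<Sum>g\<in>UNIV. W1 j g * x g) + b1 j)))"

definition onehot :: "'g \<Rightarrow> ('g \<Rightarrow> real)" where
  "onehot a = (\<lambda>g. if g = a then 1 else 0)"

definition l1_normalize :: "('g::finite \<Rightarrow> real) \<Rightarrow> ('g \<Rightarrow> real)" where
  "l1_normalize a = (\<lambda>g. a g / (\<Sum>h\<in>UNIV. \<bar>a h\<bar>))"

text \<open>Attention output A_s = 1/(n-1) * sum_{j=s-n+2}^{s} 10^{-j} 1(w_j); positions are 1-based.\<close>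
definition attn_out :: "nat \<Rightarrow> (nat \<Rightarrow> 'g) \<Rightarrow> nat \<Rightarrow> ('g \<Rightarrow> real)" where
  "attn_out n w s = (\<lambda>g. (1 / real (n - 1)) *
      (\<Sum>j\<in>{s + 2 - n..s}. (1 / 10) ^ j * onehot (w j) g))"

definition onehot_gram :: "('g list \<Rightarrow> nat) \<Rightarrow> 'g list \<Rightarrow> (nat \<Rightarrow> real)" where
  "onehot_gram enc xs = (\<lambda>j. if j = enc xs then 1 else 0)"

end

theory Submission
  imports Defs
begin

text \<open>After L1 normalisation the attention output forgets the position \<open>s\<close>: it is the
  normalised profile \<open>\<Sum>\<^sub>i 10\<^sup>-\<^sup>i \<one>(x\<^sub>i)\<close> of the window \<open>x\<close>, and distinct windows of
  equal length have distinct profiles, because each letter contributes a decimal digit.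
  A generic linear functional maps these finitely many points to distinct reals \<open>t\<^sub>k\<close>, and
  the tents \<open>relu (1 - \<bar>u - t\<^sub>k\<bar> / \<delta>)\<close>, with \<open>\<delta>\<close> the least gap between the \<open>t\<^sub>k\<close>, are
  realised by two hidden ReLU layers and output exactly the one-hot code.\<close>

definition fdot :: "('g::finite \<Rightarrow> real) \<Rightarrow> ('g \<Rightarrow> real) \<Rightarrow> real" where
  "fdot a x = (\<Sum>g\<in>UNIV. a g * x g)"

lemma fdot_diff: "fdot a (\<lambda>g. u g - v g) = fdot a u - fdot a v"
  by (simp add: fdot_def right_diff_distrib sum_subtractf)

lemma fdot_add_scaled: "fdot (\<lambda>g. a g + e * v g) u = fdot a u + e * fdot v u"
  by (simp add: fdot_def sum.distrib sum_distrib_left algebra_simps)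

lemma fdot_uminus: "fdot (\<lambda>g. - a g) u = - fdot a u"
  by (simp add: fdot_def sum_negf)

lemma fdot_self_pos:
  assumes "v \<noteq> (\<lambda>_. 0)"
  shows "fdot v v > 0"
proof -
  obtain g0 where "v g0 \<noteq> 0"
    using assms by (auto simp: fun_eq_iff)
  then have "0 < v g0 * v g0"
    using not_real_square_gt_zero by blast
  also have "\<dots> \<le> fdot v v"
    unfolding fdot_def by (rule member_le_sum) auto
  finally show ?thesis .
qed

lemma exists_fdot_nonzero:
  fixes F :: "('g::finite \<Rightarrow> real) set"
  assumes "finite F" and "(\<lambda>_. 0) \<notin> F"
  shows "\<exists>a. \<forall>v\<in>F. fdot a v \<noteq> 0"
  using assms
proof (induction F rule: finite_induct)
  case empty
  show ?case by simp
next
  case (insert v F)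
  obtain a where a: "\<forall>u\<in>F. fdot a u \<noteq> 0"
    using insert.IH insert.prems by blast
  have "v \<noteq> (\<lambda>_. 0)"
    using insert.prems by auto
  then have vv: "fdot v v \<noteq> 0"
    using fdot_self_pos by fastforce
  \<comment> \<open>Perturb \<open>a\<close> along \<open>v\<close>, avoiding the finitely many coefficients that create a zero.\<close>
  have "finite ((\<lambda>u. - fdot a u / fdot v u) ` insert v F)"
    using insert.hyps(1) by simp
  then have "\<exists>e :: real. e \<notin> (\<lambda>u. - fdot a u / fdot v u) ` insert v F"
    by (rule ex_new_if_finite[OF infinite_UNIV_char_0])
  then obtain e :: real where e: "e \<notin> (\<lambda>u. - fdot a u / fdot v u) ` insert v F" ..
  have "fdot (\<lambda>g. a g + e * v g) u \<noteq> 0" if u: "u \<in> insert v F" for u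
  proof
    note expand = fdot_add_scaled[of a e v u]
    assume zero: "fdot (\<lambda>g. a g + e * v g) u = 0"
    show False
    proof (cases "fdot v u = 0")
      case True
      then have "fdot a u = 0" and "u \<noteq> v"
        using zero expand vv by auto
      then show False
        using a u by blast
    next
      case False
      then have "e = - fdot a u / fdot v u"
        using zero expand by (simp add: field_simps)
      then show False
        using e u by blast
    qed
  qed
  then have "\<forall>u\<in>insert v F. fdot (\<lambda>g. a g + e * v g) u \<noteq> 0" by blast
  then show ?case by (rule exI[of _ "\<lambda>g. a g + e * v g"])
qed

lemma exists_fdot_inj_on:
  fixes S :: "('g::finite \<Rightarrow> real) set"
  assumes "finite S"
  shows "\<exists>a. inj_on (fdot a) S"
proof -
  let ?D = "(\<lambda>(u, v). (\<lambda>g. u g - v g)) ` {(u, v) \<in> S \<times> S. u \<noteq> v}"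
  have "finite ?D"
    by (rule finite_imageI, rule finite_subset[of _ "S \<times> S"]) (use assms in auto)
  moreover have "(\<lambda>_. 0) \<notin> ?D"
    by (auto simp: fun_eq_iff)
  ultimately have "\<exists>a. \<forall>d\<in>?D. fdot a d \<noteq> 0"
    by (rule exists_fdot_nonzero)
  then obtain a where a: "\<forall>d\<in>?D. fdot a d \<noteq> 0" ..
  have "fdot a u \<noteq> fdot a v" if "u \<in> S" "v \<in> S" "u \<noteq> v" for u v
  proof -
    have "(\<lambda>g. u g - v g) \<in> ?D"
      using that by (intro image_eqI[where x = "(u, v)"]) auto
    then have "fdot a (\<lambda>g. u g - v g) \<noteq> 0"
      by (rule bspec[OF a])
    then show ?thesis
      by (simp add: fdot_diff)
  qed
  then show ?thesis
    unfolding inj_on_def by blast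
qed

lemma finite_reals_separated:
  fixes X :: "real set"
  assumes "finite X"
  shows "\<exists>\<delta>>0. \<forall>x\<in>X. \<forall>y\<in>X. x \<noteq> y \<longrightarrow> \<delta> \<le> \<bar>x - y\<bar>"
proof -
  define D where "D = insert 1 ((\<lambda>(x, y). \<bar>x - y\<bar>) ` {(x, y) \<in> X \<times> X. x \<noteq> y})"
  have "finite D"
    unfolding D_def
    by (rule finite_insert[THEN iffD2], rule finite_imageI, rule finite_subset[of _ "X \<times> X"])
      (use assms in auto)
  then have "Min D > 0" and "\<forall>x\<in>X. \<forall>y\<in>X. x \<noteq> y \<longrightarrow> Min D \<le> \<bar>x - y\<bar>"
    by (auto simp: D_def Min_gr_iff intro!: Min_le)
  then show ?thesis by blast
qed

lemma relu_plus_relu_neg: "relu a + relu (- a) = \<bar>a\<bar>"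
  unfolding relu_def by auto

lemma sum_lessThan_div2:
  fixes f :: "nat \<Rightarrow> 'a::comm_monoid_add"
  assumes "j < K"
  shows "(\<Sum>i<2 * K. if i div 2 = j then f i else 0) = f (2 * j) + f (Suc (2 * j))"
proof -
  have "(\<Sum>i<2 * K. if i div 2 = j then f i else 0) = sum f {i \<in> {..<2 * K}. i div 2 = j}"
    by (rule sum.inter_filter[symmetric]) simp
  also have "{i \<in> {..<2 * K}. i div 2 = j} = {2 * j, Suc (2 * j)}"
    using assms by auto
  finally show ?thesis by simp
qed

text \<open>The first hidden layer holds \<open>\<plusminus>(fdot a x - c j)\<close> in the coordinates \<open>2j, 2j+1\<close>.\<close>
lemma relu_mlp_tents:
  fixes a :: "'g::finite \<Rightarrow> real" and c :: "nat \<Rightarrow> real" and \<delta> :: real and K :: nat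
  shows "\<exists>M. is_relu_mlp M \<and>
    (\<forall>x j. j < K \<longrightarrow> M x j = relu (1 - \<bar>fdot a x - c j\<bar> / \<delta>))"
proof -
  define W1 :: "nat \<Rightarrow> 'g \<Rightarrow> real" where "W1 i = (if even i then a else (\<lambda>g. - a g))" for i
  define b1 :: "nat \<Rightarrow> real" where "b1 i = (if even i then - c (i div 2) else c (i div 2))" for i
  define W2 :: "nat \<Rightarrow> nat \<Rightarrow> real" where "W2 j i = (if i div 2 = j then - 1 / \<delta> else 0)" for j i
  define W3 :: "nat \<Rightarrow> nat \<Rightarrow> real" where "W3 j i = of_bool (i = j)" for j i
  define M where
    "M x = apply_layers [(2 * K, W2, \<lambda>_. 1), (K, W3, \<lambda>_. 0)] (\<lambda>i. fdot (W1 i) x + b1 i)"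
    for x :: "'g \<Rightarrow> real"
  have "is_relu_mlp M"
    unfolding is_relu_mlp_def M_def fdot_def by blast
  moreover have "M x j = relu (1 - \<bar>fdot a x - c j\<bar> / \<delta>)" if j: "j < K" for x j
  proof -
    define y where "y i = fdot (W1 i) x + b1 i" for i
    have y: "y (2 * j) = fdot a x - c j" "y (Suc (2 * j)) = - (fdot a x - c j)"
      by (simp_all add: y_def W1_def b1_def fdot_uminus)
    have "(\<Sum>i<2 * K. W2 j i * relu (y i)) = (\<Sum>i<2 * K. if i div 2 = j then - relu (y i) / \<delta> else 0)"
      by (rule sum.cong) (auto simp: W2_def)
    also have "\<dots> = - (relu (y (2 * j)) + relu (y (Suc (2 * j)))) / \<delta>"
      by (subst sum_lessThan_div2[OF j]) (simp add: diff_divide_distrib)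
    also have "\<dots> = - \<bar>fdot a x - c j\<bar> / \<delta>"
      by (simp only: y relu_plus_relu_neg)
    finally have hidden: "(\<Sum>i<2 * K. W2 j i * relu (y i)) = - \<bar>fdot a x - c j\<bar> / \<delta>" .
    have "M x j = relu ((\<Sum>i<2 * K. W2 j i * relu (y i)) + 1)"
    proof -
      have "{..<K} \<inter> {i. i = j} = {j}"
        using j by auto
      then show ?thesis
        by (simp add: M_def y_def W3_def)
    qed
    with hidden show ?thesis by simp
  qed
  ultimately show ?thesis by blast
qed

lemma relu_mlp_onehot_interpolation:
  fixes p :: "'i \<Rightarrow> ('g::finite \<Rightarrow> real)" and lab :: "'i \<Rightarrow> nat"
  assumes "finite J" and lab: "bij_betw lab G J" and p: "inj_on p G"
  shows "\<exists>M. is_relu_mlp M \<and> (\<forall>i\<in>G. \<forall>j\<in>J. M (p i) j = (if j = lab i then 1 else 0))"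
proof -
  have "finite G"
    using assms(1) lab bij_betw_finite by blast
  then obtain a where a: "inj_on (fdot a) (p ` G)"
    using exists_fdot_inj_on[OF finite_imageI] by blast
  obtain \<delta> where \<delta>: "\<delta> > 0" "\<forall>x\<in>fdot a ` p ` G. \<forall>y\<in>fdot a ` p ` G. x \<noteq> y \<longrightarrow> \<delta> \<le> \<bar>x - y\<bar>"
    using finite_reals_separated[OF finite_imageI[OF finite_imageI[OF \<open>finite G\<close>]]] by blast
  obtain K where K: "\<forall>j\<in>J. j < K"
    using assms(1) finite_nat_set_iff_bounded by blast
  obtain M where M: "is_relu_mlp M"
    and tent: "\<And>x j. j < K \<Longrightarrow> M x j = relu (1 - \<bar>fdot a x - fdot a (p (inv_into G lab j))\<bar> / \<delta>)"
    using relu_mlp_tents[where a = a and c = "\<lambda>j. fdot a (p (inv_into G lab j))" and \<delta> = \<delta> and K = K] by blast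
  have "M (p i) j = (if j = lab i then 1 else 0)" if i: "i \<in> G" and j: "j \<in> J" for i j
  proof -
    define i' where "i' = inv_into G lab j"
    have i': "i' \<in> G" "lab i' = j"
      using j lab by (auto simp: i'_def bij_betw_def inv_into_into f_inv_into_f)
    have "j < K"
      using j K by blast
    show ?thesis
    proof (cases "j = lab i")
      case True
      then have "i' = i"
        using lab i i' unfolding bij_betw_def inj_on_def by blast
      then show ?thesis
        using tent[OF \<open>j < K\<close>] True by (simp add: i'_def relu_def)
    next
      case False
      then have "i \<noteq> i'"
        using i' by auto
      then have "p i \<noteq> p i'"
        using inj_on_contraD[OF p] i i' by blast
      then have "fdot a (p i) \<noteq> fdot a (p i')"
        using inj_on_contraD[OF a] i i' by blast
      then have "\<delta> \<le> \<bar>fdot a (p i) - fdot a (p i')\<bar>"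
        using \<delta>(2) i i' by blast
      then have "1 \<le> \<bar>fdot a (p i) - fdot a (p i')\<bar> / \<delta>"
        using \<delta>(1) by simp
      then show ?thesis
        using tent[OF \<open>j < K\<close>] False by (simp add: i'_def relu_def)
    qed
  qed
  with M show ?thesis by blast
qed

text \<open>\<open>profile [x\<^sub>0, \<dots>, x\<^sub>m\<^sub>-\<^sub>1] = \<Sum>\<^sub>i 10\<^sup>-\<^sup>i \<one>(x\<^sub>i)\<close>.\<close>
fun profile :: "'g list \<Rightarrow> 'g \<Rightarrow> real" where
  "profile [] g = 0"
| "profile (x # xs) g = onehot x g + profile xs g / 10"

lemma profile_nonneg: "0 \<le> profile xs g"
  by (induction xs) (auto simp: onehot_def)

lemma profile_less: "profile xs g < 10 / 9"
  by (induction xs) (auto simp: onehot_def)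

lemma profile_inj:
  assumes "length xs = length ys" and "profile xs = profile ys"
  shows "xs = ys"
  using assms
proof (induction xs arbitrary: ys)
  case Nil
  then show ?case by simp
next
  case (Cons x xs)
  then obtain y ys' where ys: "ys = y # ys'" and len: "length xs = length ys'"
    by (cases ys) auto
  have eq: "onehot x g + profile xs g / 10 = onehot y g + profile ys' g / 10" for g
    using Cons.prems(2) ys by (metis profile.simps(2))
  \<comment> \<open>The tails contribute less than \<open>1/9\<close>, so the leading digit is determined.\<close>
  have "x = y"
  proof (rule ccontr)
    assume "x \<noteq> y"
    with eq[of x] have "1 + profile xs x / 10 = profile ys' x / 10"
      by (simp add: onehot_def)
    with profile_nonneg[of xs x] profile_less[of ys' x] show False
      by linarith
  qed
  with eq have "profile xs = profile ys'"
    by (auto simp: fun_eq_iff)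
  with Cons.IH len \<open>x = y\<close> ys show ?case
    by blast
qed

lemma sum_onehot: "(\<Sum>g\<in>UNIV. onehot (x :: 'g::finite) g) = (1 :: real)"
  unfolding onehot_def by simp

lemma sum_profile: "(\<Sum>g\<in>UNIV. profile (xs :: 'g::finite list) g) = (\<Sum>i<length xs. (1 / 10) ^ i)"
proof (induction xs)
  case Nil
  then show ?case by simp
next
  case (Cons x xs)
  have "(\<Sum>g\<in>UNIV. profile (x # xs) g) = 1 + (\<Sum>i<length xs. (1 / 10) ^ i) / 10"
    by (simp add: sum.distrib sum_onehot Cons.IH flip: sum_divide_distrib)
  also have "\<dots> = (\<Sum>i<length (x # xs). (1 / 10) ^ i)"
    by (simp only: length_Cons sum.lessThan_Suc_shift) (simp add: sum_divide_distrib)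
  finally show ?case .
qed

lemma l1_normalize_scale:
  assumes "c > 0"
  shows "l1_normalize (\<lambda>g. c * v g) = l1_normalize v"
  using assms by (simp add: l1_normalize_def abs_mult fun_eq_iff flip: sum_distrib_left)

lemma inj_on_l1_normalize_profile:
  "inj_on (\<lambda>xs :: 'g::finite list. l1_normalize (profile xs)) {xs. length xs = m}"
proof (rule inj_onI)
  fix xs ys :: "'g list"
  assume xs: "xs \<in> {xs. length xs = m}" and ys: "ys \<in> {xs. length xs = m}"
    and eq: "l1_normalize (profile xs) = l1_normalize (profile ys)"
  define \<sigma> :: real where "\<sigma> = (\<Sum>i<m. (1 / 10) ^ i)"
  have norm: "l1_normalize (profile zs) = (\<lambda>g. profile zs g / \<sigma>)" if "length zs = m" for zs :: "'g list"
    using that by (simp add: l1_normalize_def profile_nonneg sum_profile \<sigma>_def)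
  show "xs = ys"
  proof (cases "m = 0")
    case True
    then show ?thesis
      using xs ys by simp
  next
    case False
    then have "\<sigma> > 0"
      unfolding \<sigma>_def by (intro sum_pos) auto
    moreover have "(\<lambda>g. profile xs g / \<sigma>) = (\<lambda>g. profile ys g / \<sigma>)"
      using eq norm xs ys by simp
    ultimately have "profile xs = profile ys"
      by (simp add: fun_eq_iff)
    then show ?thesis
      using profile_inj[of xs ys] xs ys by simp
  qed
qed

lemma sum_window:
  "(\<Sum>j\<in>{m..<m + k}. (1 / 10) ^ j * onehot (w j) g) = (1 / 10) ^ m * profile (map w [m..<m + k]) g"
proof (induction k arbitrary: m)
  case 0
  show ?case by simp
next
  case (Suc k)
  have "{m..<m + Suc k} = insert m {Suc m..<Suc m + k}"
    by auto
  moreover have "[m..<m + Suc k] = m # [Suc m..<Suc m + k]"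
    by (simp add: upt_conv_Cons)
  ultimately show ?case
    using Suc.IH[of "Suc m"] by (simp add: algebra_simps)
qed

lemma attn_out_eq_scaled_profile:
  assumes "n \<ge> 2" and "n - 1 \<le> s"
  shows "\<exists>c>0. attn_out n w s = (\<lambda>g. c * profile (map w [s + 2 - n..<s + 1]) g)"
proof -
  define m where "m = s + 2 - n"
  have "{s + 2 - n..s} = {m..<m + (n - 1)}" and "s + 1 = m + (n - 1)"
    using assms by (auto simp: m_def)
  then have "attn_out n w s = (\<lambda>g. (1 / real (n - 1) * (1 / 10) ^ m) * profile (map w [m..<s + 1]) g)"
    by (simp add: attn_out_def sum_window)
  moreover have "1 / real (n - 1) * (1 / 10) ^ m > 0"
    using assms by simp
  ultimately show ?thesis
    unfolding m_def by blast
qed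

theorem lemmaB12:
  fixes n :: nat and enc :: "'g::finite list \<Rightarrow> nat"
  assumes "n \<ge> 2"
    and "bij_betw enc {xs. length xs = n - 1} {1..card (UNIV :: 'g set) ^ (n - 1)}"
  shows "\<exists>M. is_relu_mlp M \<and>
    (\<forall>(w :: nat \<Rightarrow> 'g) (T :: nat) (s :: nat). n - 1 \<le> s \<and> s \<le> T \<longrightarrow>
       (\<forall>j\<in>{1..card (UNIV :: 'g set) ^ (n - 1)}.
          M (l1_normalize (attn_out n w s)) j = onehot_gram enc (map w [s + 2 - n..<s + 1]) j))"
proof -
  obtain M where M: "is_relu_mlp M"
    and onehot: "\<forall>xs\<in>{xs. length xs = n - 1}. \<forall>j\<in>{1..card (UNIV :: 'g set) ^ (n - 1)}.
      M (l1_normalize (profile xs)) j = (if j = enc xs then 1 else 0)"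
    using relu_mlp_onehot_interpolation[OF finite_atLeastAtMost assms(2) inj_on_l1_normalize_profile]
    by blast
  show ?thesis
  proof (intro exI[of _ M] conjI allI impI ballI)
    show "is_relu_mlp M"
      by (rule M)
    fix w :: "nat \<Rightarrow> 'g" and T s j
    assume s: "n - 1 \<le> s \<and> s \<le> T" and j: "j \<in> {1..card (UNIV :: 'g set) ^ (n - 1)}"
    obtain c where "c > 0"
      and attn: "attn_out n w s = (\<lambda>g. c * profile (map w [s + 2 - n..<s + 1]) g)"
      using attn_out_eq_scaled_profile assms(1) s by blast
    have "length (map w [s + 2 - n..<s + 1]) = n - 1"
      using assms(1) s by (simp only: length_map length_upt) arith
    then show "M (l1_normalize (attn_out n w s)) j = onehot_gram enc (map w [s + 2 - n..<s + 1]) j"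
      using onehot j by (simp add: attn l1_normalize_scale[OF \<open>c > 0\<close>] onehot_gram_def)
  qed
qed

end
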